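(* Let $2\le s\le t$ be integers and let $x_b,x_g,x_r\in[0,1]$ with $x_b+x_g+x_r=1$. If $\sqrt{x_b}+\sqrt{x_g}\le 1$, then \[ I_3(K'_{s,t},(x_b,x_g)) = x_b^{s/2}x_g^{t/2}\binom{s+t}{s}. \] If $\sqrt{x_b}+\sqrt{x_g}>1$, then \[ I_3(K'_{s,s},(x_b,x_g)) = \left(\frac{x_r}{2}\right)^{s}\binom{2s}{s}. \]
   Context: A $3$-colored complete graph is a complete graph $G=(V,\binom{V}{2})$ together with a coloring $f$ of its edges by the colors blue, green, red. For a color $i$, $\varrho_i(G)=e_i(G)/\binom{|V|}{2}$, where $e_i(G)$ is the number of edges of color $i$. For a $3$-colored complete graph $F$ on $\sigma$ vertices with coloring $g$, a set $X\subseteq V$ with $|X|=\sigma$ is a copy of $F$ in $G$ if there is a bijection $\pi:V(F)\to X$ with $g(uv)=f(\pi(u)\pi(v))$ for all distinct $u,v\in V(F)$; $N_3(F,G)$ is the number of copies and $\varrho_3(F,G)=N_3(F,G)/\binom{|V|}{\sigma}$. A sequence $(G_n)_{n\ge1}$ of $3$-colored complete graphs with $|V(G_n)|\to\infty$ is $F$-good if the limits $x_b=\lim\varrho_{\mathrm{blue}}(G_n)$, $x_g=\lim\varrho_{\mathrm{green}}(G_n)$ and $y=\lim\varrho_3(F,G_n)$ exist; it then realizes $(x_b,x_g,y)$. Define $I_3(F,(x_b,x_g))=\sup\{y: (x_b,x_g,y)\text{ is realized by some } F\text{-good sequence}\}$. For $2\le s\le t$, $K'_{s,t}$ is the $3$-colored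 complete graph on $V_1\sqcup V_2$ with $|V_1|=s$, $|V_2|=t$, in which edges inside $V_1$ are blue, edges inside $V_2$ are green, and edges between $V_1$ and $V_2$ are red. *)

theory Defs
  imports Complex_Main
begin

datatype color = Blue | Green | Red

text \<open>A 3-colored complete graph: a finite vertex set (of naturals) together with a
colouring of its edges (2-element subsets) by three colours.\<close>
type_synonym cgraph = "nat set \<times> (nat set \<Rightarrow> color)"

definition verts :: "cgraph \<Rightarrow> nat set" where "verts G = fst G"
definition col :: "cgraph \<Rightarrow> nat set \<Rightarrow> color" where "col G = snd G"

definition c3graph :: "cgraph \<Rightarrow> bool" where "c3graph G \<longleftrightarrow> finite (verts G)"

definition edges :: "nat set \<Rightarrow> nat set set" where
  "edges V = {e. \<exists>u v. u \<in> V \<and> v \<in> V \<and> u \<noteq> v \<and> e = {u, v}}"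

definition ecount :: "color \<Rightarrow> cgraph \<Rightarrow> nat" where
  "ecount i G = card {e \<in> edges (verts G). col G e = i}"

definition edens :: "color \<Rightarrow> cgraph \<Rightarrow> real" where
  "edens i G = real (ecount i G) / real (card (verts G) choose 2)"

definition is_copy :: "cgraph \<Rightarrow> cgraph \<Rightarrow> nat set \<Rightarrow> bool" where
  "is_copy F G X \<longleftrightarrow> X \<subseteq> verts G \<and> card X = card (verts F) \<and>
     (\<exists>\<pi>. bij_betw \<pi> (verts F) X \<and>
        (\<forall>u\<in>verts F. \<forall>v\<in>verts F. u \<noteq> v \<longrightarrow> col F {u, v} = col G {\<pi> u, \<pi> v}))"

definition N3 :: "cgraph \<Rightarrow> cgraph \<Rightarrow> nat" where
  "N3 F G = card {X. is_copy F G X}"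

definition dens3 :: "cgraph \<Rightarrow> cgraph \<Rightarrow> real" where
  "dens3 F G = real (N3 F G) / real (card (verts G) choose card (verts F))"

definition realizes :: "cgraph \<Rightarrow> (nat \<Rightarrow> cgraph) \<Rightarrow> real \<Rightarrow> real \<Rightarrow> real \<Rightarrow> bool" where
  "realizes F Gs xb xg y \<longleftrightarrow>
     (\<forall>n. c3graph (Gs n)) \<and>
     filterlim (\<lambda>n. card (verts (Gs n))) at_top sequentially \<and>
     (\<lambda>n. edens Blue (Gs n)) \<longlonglongrightarrow> xb \<and>
     (\<lambda>n. edens Green (Gs n)) \<longlonglongrightarrow> xg \<and>
     (\<lambda>n. dens3 F (Gs n)) \<longlonglongrightarrow> y"

definition I3 :: "cgraph \<Rightarrow> real \<Rightarrow> real \<Rightarrow> real" where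
  "I3 F xb xg = Sup {y. \<exists>Gs. realizes F Gs xb xg y}"

definition Kprime :: "nat \<Rightarrow> nat \<Rightarrow> cgraph" where
  "Kprime s t = ({0..<s+t},
     (\<lambda>e. if e \<subseteq> {0..<s} then Blue else if e \<inter> {0..<s} = {} then Green else Red))"

end

theory Submission
  imports Defs "HOL-Combinatorics.Multiset_Permutations"
begin

text \<open>
  A copy of \<open>K'\<^sub>s\<^sub>,\<^sub>t\<close> is a blue \<open>s\<close>-clique together with a green \<open>t\<close>-clique,
  and a Kruskal--Katona type induction bounds the number of ordered \<open>r\<close>-cliques of a colour of
  density \<open>\<rho>\<close> on \<open>n\<close> vertices by \<open>(\<surd>\<rho> n)\<^sup>r\<close>; hence \<open>s! t! N \<le> \<surd>\<rho>\<^sub>b\<^sup>s \<surd>\<rho>\<^sub>g\<^sup>t n\<^sup>s\<^sup>+\<^sup>t\<close>.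
  For \<open>K'\<^sub>s\<^sub>,\<^sub>s\<close> with \<open>s \<ge> 2\<close>, pairing the \<open>i\<close>-th blue with the \<open>i\<close>-th green vertex of an
  ordered copy is an injection into \<open>s\<close>-tuples of red edges, so \<open>(s!)\<^sup>2 N \<le> (\<rho>\<^sub>r n\<^sup>2 / 2)\<^sup>s\<close>.
  Since \<open>C(n, m) \<sim> n\<^sup>m / m!\<close>, these become the two claimed values in the limit.

  Take a blue clique on \<open>p n\<close> vertices and a green clique on \<open>q n\<close> further
  vertices, all edges between them red, and colour every other edge red if
  \<open>\<surd>x\<^sub>b + \<surd>x\<^sub>g \<le> 1\<close> (with \<open>p = \<surd>x\<^sub>b\<close>, \<open>q = \<surd>x\<^sub>g\<close>) and green otherwise (with \<open>p = \<surd>x\<^sub>b\<close>,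
  \<open>q = x\<^sub>r / (2p)\<close>). Copies with blue part in the first block and green part in the second
  attain the upper bounds.
\<close>

section \<open>Ordered cliques\<close>

definition cliques :: "('a \<Rightarrow> 'a \<Rightarrow> bool) \<Rightarrow> 'a set \<Rightarrow> nat \<Rightarrow> 'a set set" where
  "cliques adj W r = {S. S \<subseteq> W \<and> card S = r \<and> (\<forall>x\<in>S. \<forall>y\<in>S. x \<noteq> y \<longrightarrow> adj x y)}"

definition ordered_cliques :: "('a \<Rightarrow> 'a \<Rightarrow> bool) \<Rightarrow> 'a set \<Rightarrow> nat \<Rightarrow> 'a list set" where
  "ordered_cliques adj W r = {xs. length xs = r \<and> distinct xs \<and> set xs \<subseteq> W \<and>
     (\<forall>x\<in>set xs. \<forall>y\<in>set xs. x \<noteq> y \<longrightarrow> adj x y)}"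

lemma finite_ordered_cliques: "finite W \<Longrightarrow> finite (ordered_cliques adj W r)"
  by (rule finite_subset[OF _ finite_lists_length_eq[of W r]]) (auto simp: ordered_cliques_def)

lemma ordered_cliques_mono: "W \<subseteq> W' \<Longrightarrow> ordered_cliques adj W r \<subseteq> ordered_cliques adj W' r"
  by (auto simp: ordered_cliques_def)

lemma ordered_cliques_eq_UN_permutations_of_set:
  assumes "finite W"
  shows "ordered_cliques adj W r = (\<Union>S\<in>cliques adj W r. permutations_of_set S)"
  using assms finite_subset[of _ W]
  by (fastforce simp: ordered_cliques_def cliques_def permutations_of_set_def distinct_card)

lemma finite_cliques: "finite W \<Longrightarrow> finite (cliques adj W r)"
  by (rule finite_subset[of _ "Pow W"]) (auto simp: cliques_def)

lemma card_ordered_cliques: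
  assumes "finite W"
  shows "card (ordered_cliques adj W r) = fact r * card (cliques adj W r)"
proof -
  have "card (ordered_cliques adj W r) = (\<Sum>S\<in>cliques adj W r. card (permutations_of_set S))"
    unfolding ordered_cliques_eq_UN_permutations_of_set[OF assms]
    by (rule card_UN_disjoint[OF finite_cliques[OF assms]]) (auto dest: permutations_of_setD)
  also have "\<dots> = (\<Sum>S\<in>cliques adj W r. fact r)"
    using assms finite_subset[of _ W] by (intro sum.cong) (auto simp: cliques_def)
  finally show ?thesis by simp
qed

definition nbhd :: "('a \<Rightarrow> 'a \<Rightarrow> bool) \<Rightarrow> 'a set \<Rightarrow> 'a \<Rightarrow> 'a set" where
  "nbhd adj W v = {u\<in>W. u \<noteq> v \<and> adj v u}"

lemma ordered_cliques_Suc: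
  assumes "symp adj"
  shows "ordered_cliques adj W (Suc r) = (\<Union>v\<in>W. (#) v ` ordered_cliques adj (nbhd adj W v) r)"
proof (intro equalityI subsetI)
  fix xs assume xs: "xs \<in> ordered_cliques adj W (Suc r)"
  then obtain v ys where "xs = v # ys"
    by (cases xs) (auto simp: ordered_cliques_def)
  moreover from xs this have "v \<in> W" "ys \<in> ordered_cliques adj (nbhd adj W v) r"
    by (auto simp: ordered_cliques_def nbhd_def)
  ultimately show "xs \<in> (\<Union>v\<in>W. (#) v ` ordered_cliques adj (nbhd adj W v) r)"
    by blast
next
  fix xs assume "xs \<in> (\<Union>v\<in>W. (#) v ` ordered_cliques adj (nbhd adj W v) r)"
  then obtain v ys where "xs = v # ys" "v \<in> W" "ys \<in> ordered_cliques adj (nbhd adj W v) r"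
    by blast
  then show "xs \<in> ordered_cliques adj W (Suc r)"
    using assms by (auto simp: ordered_cliques_def nbhd_def dest: sympD)
qed

lemma card_ordered_cliques_Suc:
  assumes "symp adj" "finite W"
  shows "card (ordered_cliques adj W (Suc r)) = (\<Sum>v\<in>W. card (ordered_cliques adj (nbhd adj W v) r))"
  unfolding ordered_cliques_Suc[OF assms(1)]
  by (subst card_UN_disjoint) (auto simp: assms(2) nbhd_def finite_ordered_cliques card_image)

lemma card_ordered_cliques_two:
  assumes "symp adj" "finite W"
  shows "card (ordered_cliques adj W 2) = (\<Sum>v\<in>W. card (nbhd adj W v))"
proof -
  have "ordered_cliques adj V (Suc 0) = (\<lambda>u. [u]) ` V" for V
    by (auto simp: ordered_cliques_def length_Suc_conv)
  then show ?thesis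
    using card_ordered_cliques_Suc[OF assms, of 1]
    by (simp add: numeral_2_eq_2 card_image inj_on_def)
qed

lemma card_ordered_cliques_two_le: "finite W \<Longrightarrow> card (ordered_cliques adj W 2) \<le> card W ^ 2"
  using card_mono[of "{xs. set xs \<subseteq> W \<and> length xs = 2}" "ordered_cliques adj W 2"]
  by (auto simp: finite_lists_length_eq card_lists_length_eq ordered_cliques_def)

lemma card_ordered_cliques_subset_le:
  assumes "N \<subseteq> W" "finite W" "1 \<le> r"
    and IH: "real (card (ordered_cliques adj N r)) ^ 2 \<le> real (card (ordered_cliques adj N 2)) ^ r"
  shows "real (card (ordered_cliques adj N r))
    \<le> sqrt (real (card (ordered_cliques adj W 2)) ^ (r - 1)) * real (card N)"
proof -
  let ?P = "real (card (ordered_cliques adj W 2))" and ?Q = "real (card (ordered_cliques adj N 2))"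
  have finN: "finite N"
    using assms finite_subset by blast
  have "?Q \<le> ?P"
    using assms by (intro of_nat_mono card_mono finite_ordered_cliques ordered_cliques_mono)
  moreover have "?Q \<le> real (card N) ^ 2"
    using of_nat_mono[OF card_ordered_cliques_two_le[OF finN, of adj], where 'a=real] by simp
  ultimately have "?Q ^ (r - 1) * ?Q \<le> ?P ^ (r - 1) * real (card N) ^ 2"
    by (intro mult_mono power_mono) auto
  moreover have "?Q ^ r = ?Q ^ (r - 1) * ?Q"
    using assms(3) by (cases r) (auto simp: mult.commute)
  ultimately have "real (card (ordered_cliques adj N r)) ^ 2 \<le> (sqrt (?P ^ (r - 1)) * real (card N)) ^ 2"
    using IH unfolding power_mult_distrib by simp
  then show ?thesis
    by (rule power2_le_imp_le) simp
qed

text \<open>A Kruskal--Katona type bound: an ordered \<open>r\<close>-clique is a vertex followed by an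
  ordered \<open>(r - 1)\<close>-clique in its neighbourhood.\<close>
lemma card_ordered_cliques_sq_le:
  assumes "symp adj" "2 \<le> r" "finite W"
  shows "real (card (ordered_cliques adj W r)) ^ 2 \<le> real (card (ordered_cliques adj W 2)) ^ r"
  using assms(2,3)
proof (induction r arbitrary: W rule: nat_induct_at_least)
  case base
  then show ?case by simp
next
  case (Suc r)
  define P where "P = real (card (ordered_cliques adj W 2))"
  have "real (card (ordered_cliques adj W (Suc r)))
      \<le> (\<Sum>v\<in>W. sqrt (P ^ (r - 1)) * real (card (nbhd adj W v)))"
    unfolding card_ordered_cliques_Suc[OF assms(1) Suc.prems] of_nat_sum P_def
    using Suc by (intro sum_mono card_ordered_cliques_subset_le Suc.IH) (auto simp: nbhd_def)
  also have "\<dots> = sqrt (P ^ (r - 1)) * P"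
    unfolding P_def card_ordered_cliques_two[OF assms(1) Suc.prems] by (simp add: sum_distrib_left)
  finally have "real (card (ordered_cliques adj W (Suc r))) ^ 2 \<le> (sqrt (P ^ (r - 1)) * P) ^ 2"
    by (rule power_mono) simp
  also have "\<dots> = P ^ (r - 1) * P ^ 2"
    by (simp add: power_mult_distrib P_def)
  also have "\<dots> = P ^ Suc r"
    using Suc.hyps by (simp flip: power_add)
  finally show ?case
    unfolding P_def .
qed

section \<open>Edge counts and densities\<close>

lemma edges_eq: "edges V = {e. e \<subseteq> V \<and> card e = 2}"
  unfolding edges_def by (auto simp: card_2_iff)

lemma finite_edges: "finite V \<Longrightarrow> finite (edges V)"
  unfolding edges_eq by (rule finite_subset[of _ "Pow V"]) auto

lemma card_edges: "finite V \<Longrightarrow> card (edges V) = card V choose 2"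
  unfolding edges_eq by (rule n_subsets)

lemma edges_restrict: "W \<subseteq> V \<Longrightarrow> {e \<in> edges V. e \<subseteq> W} = edges W"
  unfolding edges_eq by blast

lemma ecount_sum:
  assumes "finite (verts G)"
  shows "ecount Blue G + ecount Green G + ecount Red G = card (verts G) choose 2"
proof -
  let ?E = "\<lambda>c. {e \<in> edges (verts G). col G e = c}"
  have "edges (verts G) = ?E Blue \<union> ?E Green \<union> ?E Red"
    by (auto intro: color.exhaust)
  moreover have "card (?E Blue \<union> ?E Green \<union> ?E Red) = card (?E Blue) + card (?E Green) + card (?E Red)"
    using finite_edges[OF assms] by (subst card_Un_disjoint; auto)+
  ultimately have "card (edges (verts G)) = card (?E Blue) + card (?E Green) + card (?E Red)"
    by simp
  then show ?thesis
    unfolding ecount_def using card_edges[OF assms] by simp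
qed

lemma edens_sum:
  assumes "finite (verts G)" "2 \<le> card (verts G)"
  shows "edens Blue G + edens Green G + edens Red G = 1"
proof -
  have "real (ecount Blue G) + real (ecount Green G) + real (ecount Red G)
      = real (card (verts G) choose 2)"
    using ecount_sum[OF assms(1)] by (metis of_nat_add)
  moreover have "real (card (verts G) choose 2) > 0"
    using assms(2) by simp
  ultimately show ?thesis
    unfolding edens_def by (simp add: field_simps)
qed

lemma ecount_eq_edens:
  assumes "finite (verts G)"
  shows "real (ecount c G) = edens c G * real (card (verts G) choose 2)"
proof (cases "card (verts G) choose 2 = 0")
  case True
  have "ecount c G \<le> card (edges (verts G))"
    unfolding ecount_def by (rule card_mono) (auto simp: assms finite_edges)
  with True have "ecount c G = 0"
    unfolding card_edges[OF assms] by linarith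
  then show ?thesis
    by (simp add: edens_def)
qed (simp add: edens_def)

lemma edens_nonneg: "0 \<le> edens c G"
  by (simp add: edens_def)

lemma two_mult_choose_two_le: "2 * (n choose 2) \<le> n ^ 2"
proof -
  have "2 * (n choose 2) \<le> n * (n - 1)"
    unfolding choose_two by simp
  also have "\<dots> \<le> n ^ 2"
    by (simp add: power2_eq_square)
  finally show ?thesis .
qed

lemma ecount_le_edens:
  assumes "finite (verts G)"
  shows "2 * real (ecount c G) \<le> edens c G * real (card (verts G)) ^ 2"
proof -
  have "2 * real (card (verts G) choose 2) \<le> real (card (verts G)) ^ 2"
    using of_nat_mono[OF two_mult_choose_two_le, where 'a=real] by simp
  then show ?thesis
    unfolding ecount_eq_edens[OF assms] using edens_nonneg[of c G]
    by (metis mult.left_commute mult_left_mono)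
qed

definition col_adj :: "cgraph \<Rightarrow> color \<Rightarrow> nat \<Rightarrow> nat \<Rightarrow> bool" where
  "col_adj G c u v \<longleftrightarrow> u \<noteq> v \<and> col G {u, v} = c"

lemma symp_col_adj: "symp (col_adj G c)"
  by (auto intro: sympI simp: col_adj_def insert_commute)

lemma cliques_col_adj_two: "cliques (col_adj G c) V 2 = {e \<in> edges V. col G e = c}"
  unfolding cliques_def edges_eq col_adj_def by (auto simp: card_2_iff insert_commute)

lemma card_cliques_col_adj_le:
  assumes fin: "finite (verts G)" and r: "2 \<le> r"
  shows "fact r * real (card (cliques (col_adj G c) (verts G) r))
    \<le> (sqrt (edens c G) * real (card (verts G))) ^ r"
proof -
  let ?n = "real (card (verts G))"
  let ?K = "\<lambda>r. real (card (ordered_cliques (col_adj G c) (verts G) r))"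
  have K: "?K r = fact r * real (card (cliques (col_adj G c) (verts G) r))" for r
    using card_ordered_cliques[OF fin] by simp
  have "?K 2 = 2 * real (ecount c G)"
    using K[of 2] by (simp add: cliques_col_adj_two ecount_def)
  then have "?K 2 \<le> edens c G * ?n ^ 2"
    using ecount_le_edens[OF fin] by simp
  then have "?K r ^ 2 \<le> (edens c G * ?n ^ 2) ^ r"
    using card_ordered_cliques_sq_le[OF symp_col_adj r fin] by (meson order_trans power_mono of_nat_0_le_iff)
  also have "\<dots> = ((sqrt (edens c G) * ?n) ^ 2) ^ r"
    by (simp add: edens_def power_mult_distrib)
  also have "\<dots> = ((sqrt (edens c G) * ?n) ^ r) ^ 2"
    by (simp add: mult.commute flip: power_mult)
  finally show ?thesis
    unfolding K by (rule power2_le_imp_le) (simp add: edens_def)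
qed

section \<open>Copies of \<open>K'\<close>\<close>

definition part_col :: "'a set \<Rightarrow> 'a set \<Rightarrow> 'a \<Rightarrow> 'a \<Rightarrow> color" where
  "part_col A B x y = (if x \<in> A \<and> y \<in> A then Blue else if x \<in> B \<and> y \<in> B then Green else Red)"

lemma part_col_image:
  assumes "inj_on f (A \<union> B)" "x \<in> A \<union> B" "y \<in> A \<union> B"
  shows "part_col (f ` A) (f ` B) (f x) (f y) = part_col A B x y"
  using assms by (simp add: part_col_def inj_on_image_mem_iff)

lemma verts_Kprime: "verts (Kprime s t) = {0..<s + t}"
  by (simp add: verts_def Kprime_def)

lemma col_Kprime:
  assumes "u \<in> {0..<s + t}" "v \<in> {0..<s + t}" "u \<noteq> v"
  shows "col (Kprime s t) {u, v} = part_col {0..<s} {s..<s + t} u v"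
  using assms by (auto simp: col_def Kprime_def part_col_def)

definition Kprime_parts :: "nat \<Rightarrow> nat \<Rightarrow> cgraph \<Rightarrow> (nat set \<times> nat set) set" where
  "Kprime_parts s t G = {(A, B). A \<union> B \<subseteq> verts G \<and> A \<inter> B = {} \<and> card A = s \<and> card B = t \<and>
     (\<forall>x\<in>A \<union> B. \<forall>y\<in>A \<union> B. x \<noteq> y \<longrightarrow> col G {x, y} = part_col A B x y)}"

lemma Kprime_partsD:
  assumes "(A, B) \<in> Kprime_parts s t G"
  shows "A \<subseteq> verts G" "B \<subseteq> verts G" "A \<inter> B = {}" "card A = s" "card B = t"
  using assms by (simp_all add: Kprime_parts_def)

lemma col_Kprime_parts:
  assumes "(A, B) \<in> Kprime_parts s t G" "x \<in> A \<union> B" "y \<in> A \<union> B" "x \<noteq> y"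
  shows "col G {x, y} = part_col A B x y"
  using assms by (simp add: Kprime_parts_def)

lemma finite_Kprime_parts: "finite (verts G) \<Longrightarrow> finite (Kprime_parts s t G)"
  by (rule finite_subset[of _ "Pow (verts G) \<times> Pow (verts G)"]) (auto simp: Kprime_parts_def)

lemma Kprime_parts_of_copy:
  assumes "is_copy (Kprime s t) G X"
  obtains A B where "(A, B) \<in> Kprime_parts s t G" "X = A \<union> B"
proof -
  obtain \<pi> where XV: "X \<subseteq> verts G" and bij: "bij_betw \<pi> {0..<s + t} X"
    and c: "\<forall>u\<in>{0..<s + t}. \<forall>v\<in>{0..<s + t}. u \<noteq> v \<longrightarrow> col (Kprime s t) {u, v} = col G {\<pi> u, \<pi> v}"
    using assms by (auto simp: is_copy_def verts_Kprime)
  have I: "{0..<s + t} = {0..<s} \<union> {s..<s + t}"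
    by auto
  let ?A = "\<pi> ` {0..<s}" and ?B = "\<pi> ` {s..<s + t}"
  have inj: "inj_on \<pi> ({0..<s} \<union> {s..<s + t})" and X: "X = ?A \<union> ?B"
    using bij unfolding I bij_betw_def by auto
  have "col G {x, y} = part_col ?A ?B x y" if xy: "x \<in> X" "y \<in> X" "x \<noteq> y" for x y
  proof -
    obtain u v where "u \<in> {0..<s + t}" "v \<in> {0..<s + t}" "x = \<pi> u" "y = \<pi> v"
      using xy bij_betw_imp_surj_on[OF bij] by blast
    moreover from this have "u \<noteq> v"
      using xy by auto
    ultimately show ?thesis
      using c col_Kprime part_col_image[OF inj] I by auto
  qed
  moreover have "?A \<inter> ?B = {}"
    using inj_on_image_Int[OF inj, of "{0..<s}" "{s..<s + t}"] by auto
  moreover have "card ?A = s" "card ?B = t"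
    using inj by (auto simp: card_image inj_on_Un)
  ultimately have "(?A, ?B) \<in> Kprime_parts s t G"
    using XV X by (auto simp: Kprime_parts_def)
  then show ?thesis
    using X that by blast
qed

lemma copy_of_Kprime_parts:
  assumes fin: "finite (verts G)" and AB: "(A, B) \<in> Kprime_parts s t G"
  shows "is_copy (Kprime s t) G (A \<union> B)"
proof -
  have "finite A" "finite B"
    using Kprime_partsD[OF AB] fin finite_subset by auto
  then have "\<exists>f. bij_betw f {0..<s} A" "\<exists>g. bij_betw g {s..<s + t} B"
    using finite_same_card_bij[of "{0..<s}" A] finite_same_card_bij[of "{s..<s + t}" B]
      Kprime_partsD[OF AB] by auto
  then obtain f g where f: "bij_betw f {0..<s} A" and g: "bij_betw g {s..<s + t} B"
    by blast
  define \<pi> where "\<pi> u = (if u \<in> {0..<s} then f u else g u)" for u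
  have I: "{0..<s} \<union> {s..<s + t} = {0..<s + t}"
    by auto
  have bij: "bij_betw \<pi> {0..<s + t} (A \<union> B)"
    unfolding \<pi>_def I[symmetric] by (rule bij_betw_disjoint_Un[OF f g]) (use Kprime_partsD[OF AB] in auto)
  have img: "\<pi> ` {0..<s} = A" "\<pi> ` {s..<s + t} = B"
    using f g by (auto simp: \<pi>_def bij_betw_def)
  have "col (Kprime s t) {u, v} = col G {\<pi> u, \<pi> v}"
    if "u \<in> {0..<s + t}" "v \<in> {0..<s + t}" "u \<noteq> v" for u v
  proof -
    have inj: "inj_on \<pi> ({0..<s} \<union> {s..<s + t})"
      using bij I by (simp add: bij_betw_def)
    have "col (Kprime s t) {u, v} = part_col {0..<s} {s..<s + t} u v"
      by (rule col_Kprime[OF that])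
    also have "\<dots> = part_col (\<pi> ` {0..<s}) (\<pi> ` {s..<s + t}) (\<pi> u) (\<pi> v)"
      using part_col_image[OF inj, of u v] that I by simp
    also have "\<dots> = col G {\<pi> u, \<pi> v}"
      unfolding img using that bij
      by (intro col_Kprime_parts[OF AB, symmetric]) (auto simp: bij_betw_def inj_on_eq_iff)
    finally show ?thesis .
  qed
  then show ?thesis
    using Kprime_partsD[OF AB] bij bij_betw_same_card[OF bij] by (auto simp: is_copy_def verts_Kprime)
qed

lemma copies_Kprime:
  "finite (verts G) \<Longrightarrow> {X. is_copy (Kprime s t) G X} = (\<lambda>(A, B). A \<union> B) ` Kprime_parts s t G"
  by (auto elim!: Kprime_parts_of_copy intro: copy_of_Kprime_parts)

lemma N3_Kprime_le_card_parts:
  "finite (verts G) \<Longrightarrow> N3 (Kprime s t) G \<le> card (Kprime_parts s t G)"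
  unfolding N3_def copies_Kprime by (rule card_image_le[OF finite_Kprime_parts])

lemma N3_Kprime_ge:
  assumes fin: "finite (verts G)" and AB: "A \<union> B \<subseteq> verts G" "A \<inter> B = {}"
    and col: "\<forall>x\<in>A \<union> B. \<forall>y\<in>A \<union> B. x \<noteq> y \<longrightarrow> col G {x, y} = part_col A B x y"
  shows "(card A choose s) * (card B choose t) \<le> N3 (Kprime s t) G"
proof -
  let ?S = "{S. S \<subseteq> A \<and> card S = s}" and ?T = "{T. T \<subseteq> B \<and> card T = t}"
  have finAB: "finite A" "finite B"
    using AB fin finite_subset by auto
  have sub: "?S \<times> ?T \<subseteq> Kprime_parts s t G"
  proof
    fix p assume "p \<in> ?S \<times> ?T"
    then obtain S T where p: "p = (S, T)" and ST: "S \<subseteq> A" "T \<subseteq> B" "card S = s" "card T = t"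
      by auto
    have "col G {x, y} = part_col S T x y" if "x \<in> S \<union> T" "y \<in> S \<union> T" "x \<noteq> y" for x y
    proof -
      have "col G {x, y} = part_col A B x y"
        using col that ST by blast
      also have "\<dots> = part_col S T x y"
        using that ST AB by (auto simp: part_col_def)
      finally show ?thesis .
    qed
    then show "p \<in> Kprime_parts s t G"
      unfolding p using ST AB by (auto simp: Kprime_parts_def)
  qed
  have inj: "inj_on (\<lambda>(S, T). S \<union> T) (?S \<times> ?T)"
  proof (rule inj_onI, clarify)
    fix S T S' T' assume "S \<subseteq> A" "T \<subseteq> B" "S' \<subseteq> A" "T' \<subseteq> B" "S \<union> T = S' \<union> T'"
    then show "S = S' \<and> T = T'"
      using AB(2) by blast
  qed
  have "(card A choose s) * (card B choose t) = card (?S \<times> ?T)"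
    by (simp add: card_cartesian_product n_subsets finAB)
  also have "\<dots> = card ((\<lambda>(S, T). S \<union> T) ` (?S \<times> ?T))"
    by (rule card_image[OF inj, symmetric])
  also have "\<dots> \<le> N3 (Kprime s t) G"
    unfolding N3_def copies_Kprime[OF fin]
    by (intro card_mono finite_imageI finite_Kprime_parts fin image_mono sub)
  finally show ?thesis .
qed

section \<open>Upper bounds on the number of copies\<close>

lemma col_Kprime_parts_cases:
  assumes "(A, B) \<in> Kprime_parts s t G"
  shows "x \<in> A \<Longrightarrow> y \<in> A \<Longrightarrow> x \<noteq> y \<Longrightarrow> col G {x, y} = Blue"
    and "x \<in> B \<Longrightarrow> y \<in> B \<Longrightarrow> x \<noteq> y \<Longrightarrow> col G {x, y} = Green"
    and "x \<in> A \<Longrightarrow> y \<in> B \<Longrightarrow> col G {x, y} = Red"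
proof -
  have disj: "A \<inter> B = {}"
    using assms by (simp add: Kprime_parts_def)
  have c: "col G {x, y} = part_col A B x y" if "x \<in> A \<union> B" "y \<in> A \<union> B" "x \<noteq> y" for x y
    using col_Kprime_parts[OF assms] that .
  show "x \<in> A \<Longrightarrow> y \<in> A \<Longrightarrow> x \<noteq> y \<Longrightarrow> col G {x, y} = Blue"
    by (simp add: c part_col_def)
  show "x \<in> B \<Longrightarrow> y \<in> B \<Longrightarrow> x \<noteq> y \<Longrightarrow> col G {x, y} = Green"
    using disj by (auto simp: c part_col_def)
  show "x \<in> A \<Longrightarrow> y \<in> B \<Longrightarrow> col G {x, y} = Red"
    using disj by (subst c) (auto simp: part_col_def)
qed

lemma Kprime_parts_subset_cliques:
  "Kprime_parts s t G \<subseteq> cliques (col_adj G Blue) (verts G) s \<times> cliques (col_adj G Green) (verts G) t"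
proof
  fix p assume p: "p \<in> Kprime_parts s t G"
  obtain A B where AB: "p = (A, B)"
    by fastforce
  show "p \<in> cliques (col_adj G Blue) (verts G) s \<times> cliques (col_adj G Green) (verts G) t"
    using p col_Kprime_parts_cases(1,2)[OF p[unfolded AB]]
    unfolding AB by (auto simp: cliques_def col_adj_def Kprime_parts_def)
qed

lemma N3_Kprime_le_edens:
  assumes fin: "finite (verts G)" and "2 \<le> s" "2 \<le> t"
  shows "fact s * fact t * real (N3 (Kprime s t) G)
    \<le> sqrt (edens Blue G) ^ s * sqrt (edens Green G) ^ t * real (card (verts G)) ^ (s + t)"
proof -
  let ?n = "real (card (verts G))"
  let ?KB = "real (card (cliques (col_adj G Blue) (verts G) s))"
  let ?KG = "real (card (cliques (col_adj G Green) (verts G) t))"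
  have "N3 (Kprime s t) G \<le> card (cliques (col_adj G Blue) (verts G) s \<times> cliques (col_adj G Green) (verts G) t)"
    using N3_Kprime_le_card_parts[OF fin] card_mono[OF _ Kprime_parts_subset_cliques]
    by (meson fin finite_SigmaI finite_cliques le_trans)
  then have "real (N3 (Kprime s t) G) \<le> ?KB * ?KG"
    by (metis card_cartesian_product of_nat_le_iff of_nat_mult)
  then have "fact s * fact t * real (N3 (Kprime s t) G) \<le> (fact s * ?KB) * (fact t * ?KG)"
    by (simp add: mult.assoc mult.left_commute)
  also have "\<dots> \<le> (sqrt (edens Blue G) * ?n) ^ s * (sqrt (edens Green G) * ?n) ^ t"
    using assms by (intro mult_mono card_cliques_col_adj_le) (auto simp: edens_nonneg)
  also have "\<dots> = sqrt (edens Blue G) ^ s * sqrt (edens Green G) ^ t * ?n ^ (s + t)"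
    by (simp add: power_mult_distrib power_add)
  finally show ?thesis .
qed

definition ordered_Kprime_parts :: "nat \<Rightarrow> nat \<Rightarrow> cgraph \<Rightarrow> ((nat set \<times> nat set) \<times> nat list \<times> nat list) set" where
  "ordered_Kprime_parts s t G =
     (SIGMA AB:Kprime_parts s t G. permutations_of_set (fst AB) \<times> permutations_of_set (snd AB))"

lemma card_ordered_Kprime_parts:
  assumes fin: "finite (verts G)"
  shows "card (ordered_Kprime_parts s t G) = fact s * fact t * card (Kprime_parts s t G)"
proof -
  have "card (ordered_Kprime_parts s t G)
      = (\<Sum>AB\<in>Kprime_parts s t G. card (permutations_of_set (fst AB) \<times> permutations_of_set (snd AB)))"
    unfolding ordered_Kprime_parts_def by (rule card_SigmaI) (auto simp: finite_Kprime_parts fin)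
  also have "\<dots> = (\<Sum>AB\<in>Kprime_parts s t G. fact s * fact t)"
  proof (intro sum.cong refl)
    fix AB assume "AB \<in> Kprime_parts s t G"
    moreover obtain A B where [simp]: "AB = (A, B)"
      by fastforce
    ultimately have AB: "(A, B) \<in> Kprime_parts s t G"
      by simp
    then have "finite A" "finite B"
      using Kprime_partsD[OF AB] fin finite_subset by auto
    then show "card (permutations_of_set (fst AB) \<times> permutations_of_set (snd AB)) = fact s * fact t"
      using Kprime_partsD[OF AB] by (simp add: card_cartesian_product)
  qed
  finally show ?thesis
    by simp
qed

lemma ordered_Kprime_partsD:
  assumes "((A, B), a, b) \<in> ordered_Kprime_parts s t G"
  shows "(A, B) \<in> Kprime_parts s t G" "set a = A" "set b = B" "distinct a" "distinct b"
  using assms by (auto simp: ordered_Kprime_parts_def dest: permutations_of_setD)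

lemma length_ordered_Kprime_parts:
  assumes "finite (verts G)" "((A, B), a, b) \<in> ordered_Kprime_parts s t G"
  shows "length a = s" "length b = t"
  using ordered_Kprime_partsD[OF assms(2)] Kprime_partsD[of A B s t G] distinct_card by metis+

lemma Kprime_parts_blue_meets_green:
  assumes AB: "(A, B) \<in> Kprime_parts s t G" and AB': "(A', B') \<in> Kprime_parts s' t' G"
    and "y \<in> A' \<inter> B" "z \<in> A' \<inter> (A \<union> B)"
  shows "z = y"
proof (rule ccontr)
  assume "z \<noteq> y"
  then have "col G {y, z} = Blue"
    using col_Kprime_parts_cases(1)[OF AB'] assms(3,4) by blast
  moreover have "col G {y, z} = Green" if "z \<in> B"
    using col_Kprime_parts_cases(2)[OF AB] assms(3) that \<open>z \<noteq> y\<close> by blast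
  moreover have "col G {y, z} = Red" if "z \<in> A"
    using col_Kprime_parts_cases(3)[OF AB that, of y] assms(3) by (simp add: insert_commute)
  ultimately show False
    using assms(4) by auto
qed

text \<open>The matching pairing the \<open>i\<close>-th entries of the two parts determines the ordered copy;
  \<open>s \<ge> 2\<close> provides a second pair to rule out a swapped pair.\<close>
lemma ordered_Kprime_parts_matching_inj:
  assumes fin: "finite (verts G)" and s: "2 \<le> s"
    and p: "((A, B), a, b) \<in> ordered_Kprime_parts s s G"
    and p': "((A', B'), a', b') \<in> ordered_Kprime_parts s s G"
    and eq: "map2 (\<lambda>x y. {x, y}) a b = map2 (\<lambda>x y. {x, y}) a' b'"
  shows "a = a'" "b = b'"
proof -
  note AB = ordered_Kprime_partsD[OF p] and AB' = ordered_Kprime_partsD[OF p']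
  have len: "length a = s" "length b = s" "length a' = s" "length b' = s"
    using length_ordered_Kprime_parts[OF fin] p p' by blast+
  have pair: "{a ! i, b ! i} = {a' ! i, b' ! i}" if "i < s" for i
    using arg_cong[OF eq, of "\<lambda>zs. zs ! i"] that len by simp
  have a_eq: "a' ! i = a ! i" if i: "i < s" for i
  proof (rule ccontr)
    assume "a' ! i \<noteq> a ! i"
    then have "a' ! i = b ! i"
      using pair[OF i] by (auto simp: doubleton_eq_iff)
    then have "a' ! i \<in> A' \<inter> B"
      using AB AB' i len nth_mem[of i a'] nth_mem[of i b] by auto
    moreover have "\<exists>j<s. j \<noteq> i"
      using s by (intro exI[of _ "if i = 0 then 1 else 0"]) auto
    then obtain j where j: "j < s" "j \<noteq> i"
      by blast
    moreover have "a' ! j \<in> A' \<inter> (A \<union> B)"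
      using pair[OF j(1)] AB AB' j len nth_mem[of j a'] nth_mem[of j a] nth_mem[of j b]
      by (auto simp: doubleton_eq_iff)
    ultimately have "a' ! j = a' ! i"
      using Kprime_parts_blue_meets_green[OF AB(1) AB'(1)] by blast
    then show False
      using AB'(4) i j len by (simp add: nth_eq_iff_index_eq)
  qed
  then show "a = a'"
    using len by (intro nth_equalityI) auto
  show "b = b'"
  proof (rule nth_equalityI)
    show "length b = length b'"
      using len by simp
    fix i assume "i < length b"
    then show "b ! i = b' ! i"
      using pair[of i] a_eq[of i] len by (auto simp: doubleton_eq_iff)
  qed
qed

lemma map2_ordered_Kprime_parts_Red:
  assumes "((A, B), a, b) \<in> ordered_Kprime_parts s t G"
  shows "set (map2 (\<lambda>x y. {x, y}) a b) \<subseteq> {e \<in> edges (verts G). col G e = Red}"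
proof
  fix e assume "e \<in> set (map2 (\<lambda>x y. {x, y}) a b)"
  then obtain x y where xy: "(x, y) \<in> set (zip a b)" "e = {x, y}"
    by auto
  note AB = ordered_Kprime_partsD[OF assms]
  have "x \<in> A" "y \<in> B"
    using xy(1) AB by (auto dest: set_zip_leftD set_zip_rightD)
  moreover from this have "x \<noteq> y" "x \<in> verts G" "y \<in> verts G"
    using Kprime_partsD[OF AB(1)] by auto
  ultimately show "e \<in> {e \<in> edges (verts G). col G e = Red}"
    using col_Kprime_parts_cases(3)[OF AB(1)] xy(2) unfolding edges_def by blast
qed

lemma card_Kprime_parts_le_ecount_Red:
  assumes fin: "finite (verts G)" and s: "2 \<le> s"
  shows "fact s ^ 2 * card (Kprime_parts s s G) \<le> ecount Red G ^ s"
proof -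
  let ?D = "ordered_Kprime_parts s s G" and ?R = "{e \<in> edges (verts G). col G e = Red}"
  let ?m = "\<lambda>(AB :: nat set \<times> nat set, a, b). map2 (\<lambda>x y. {x, y}) a b"
  have "inj_on ?m ?D"
  proof (rule inj_onI)
    fix p p' assume pD: "p \<in> ?D" "p' \<in> ?D" and eq: "?m p = ?m p'"
    obtain A B a b A' B' a' b' where P: "p = ((A, B), a, b)" "p' = ((A', B'), a', b')"
      by (cases p, cases p') (metis prod.exhaust)
    have "a = a'" "b = b'"
      using ordered_Kprime_parts_matching_inj[OF fin s] pD eq unfolding P by auto
    moreover have "A = set a" "B = set b" "A' = set a'" "B' = set b'"
      using ordered_Kprime_partsD(2,3) pD unfolding P by blast+
    ultimately show "p = p'"
      unfolding P by simp
  qed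
  moreover have "?m ` ?D \<subseteq> {zs. set zs \<subseteq> ?R \<and> length zs = s}"
  proof (rule image_subsetI)
    fix p assume pD: "p \<in> ?D"
    obtain A B a b where P: "p = ((A, B), a, b)"
      by (metis prod.exhaust)
    show "?m p \<in> {zs. set zs \<subseteq> ?R \<and> length zs = s}"
      using map2_ordered_Kprime_parts_Red length_ordered_Kprime_parts[OF fin] pD unfolding P by simp
  qed
  ultimately have "card ?D \<le> card {zs. set zs \<subseteq> ?R \<and> length zs = s}"
    by (intro card_inj_on_le) (auto simp: finite_lists_length_eq finite_edges fin)
  also have "\<dots> = ecount Red G ^ s"
    by (simp add: card_lists_length_eq finite_edges fin ecount_def)
  finally show ?thesis
    by (simp add: card_ordered_Kprime_parts[OF fin] power2_eq_square)
qed

lemma N3_Kprime_le_edens_Red: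
  assumes fin: "finite (verts G)" and "2 \<le> s"
  shows "fact s ^ 2 * real (N3 (Kprime s s) G) \<le> (edens Red G / 2) ^ s * real (card (verts G)) ^ (2 * s)"
proof -
  let ?n = "real (card (verts G))"
  have "fact s ^ 2 * N3 (Kprime s s) G \<le> ecount Red G ^ s"
    using mult_le_mono2[OF N3_Kprime_le_card_parts[OF fin]] card_Kprime_parts_le_ecount_Red[OF assms]
    by (rule le_trans)
  then have "fact s ^ 2 * real (N3 (Kprime s s) G) \<le> real (ecount Red G) ^ s"
    using of_nat_mono[where 'a=real] by fastforce
  also have "\<dots> \<le> (edens Red G / 2 * ?n ^ 2) ^ s"
    using ecount_le_edens[OF fin, of Red] by (intro power_mono) auto
  also have "\<dots> = (edens Red G / 2) ^ s * ?n ^ (2 * s)"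
    by (simp add: power_mult_distrib power_divide power_mult)
  finally show ?thesis .
qed

section \<open>Binomial asymptotics\<close>

lemma tendsto_choose_div_power:
  fixes m :: "nat \<Rightarrow> nat"
  assumes "(\<lambda>n. real (m n) / real n) \<longlonglongrightarrow> c"
  shows "(\<lambda>n. real (m n choose k) / real n ^ k) \<longlonglongrightarrow> c ^ k / fact k"
proof -
  have eq: "real (m n choose k) / real n ^ k
      = (\<Prod>i = 0..<k. real (m n) / real n - real i / real n) / fact k" for n
  proof -
    have "real (m n choose k) = (\<Prod>i = 0..<k. real (m n) - real i) / fact k"
      using gbinomial_mult_fact'[of "real (m n)" k] by (simp add: binomial_gbinomial field_simps)
    then show ?thesis
      by (simp add: prod_dividef flip: diff_divide_distrib)
  qed
  have "(\<lambda>n. \<Prod>i = 0..<k. real (m n) / real n - real i / real n) \<longlonglongrightarrow> (\<Prod>i = 0..<k. c - 0)"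
    by (intro tendsto_prod tendsto_diff assms lim_const_over_n)
  from tendsto_divide[OF this tendsto_const[of "fact k"]] show ?thesis
    unfolding eq by simp
qed

lemma tendsto_choose_div_power_self: "(\<lambda>n. real (n choose k) / real n ^ k) \<longlonglongrightarrow> 1 / fact k"
proof -
  have "(\<lambda>n. real n / real n) \<longlonglongrightarrow> 1"
    by (rule Lim_transform_eventually[OF tendsto_const]) (simp add: eventually_sequentially exI[of _ 1])
  from tendsto_choose_div_power[OF this] show ?thesis
    by simp
qed

lemma tendsto_choose_div_choose:
  fixes m :: "nat \<Rightarrow> nat"
  assumes "(\<lambda>n. real (m n) / real n) \<longlonglongrightarrow> c"
  shows "(\<lambda>n. real (m n choose k) / real (n choose k)) \<longlonglongrightarrow> c ^ k"
proof -
  have "(\<lambda>n. (real (m n choose k) / real n ^ k) / (real (n choose k) / real n ^ k))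
      \<longlonglongrightarrow> (c ^ k / fact k) / (1 / fact k)"
    by (intro tendsto_divide tendsto_choose_div_power assms tendsto_choose_div_power_self) simp
  moreover have "\<forall>\<^sub>F n in sequentially.
      (real (m n choose k) / real n ^ k) / (real (n choose k) / real n ^ k)
      = real (m n choose k) / real (n choose k)"
    using eventually_gt_at_top[of 0] by eventually_elim simp
  ultimately show ?thesis
    by (simp add: Lim_transform_eventually)
qed

lemma tendsto_nat_floor_mult_div:
  fixes p :: real
  assumes "0 \<le> p"
  shows "(\<lambda>n. real (nat \<lfloor>p * real n\<rfloor>) / real n) \<longlonglongrightarrow> p"
proof (rule tendsto_sandwich[of "\<lambda>n. p - 1 / real n" _ _ "\<lambda>n. p"])
  have floor: "real (nat \<lfloor>p * real n\<rfloor>) = real_of_int \<lfloor>p * real n\<rfloor>" for n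
    using assms by simp
  show "\<forall>\<^sub>F n in sequentially. p - 1 / real n \<le> real (nat \<lfloor>p * real n\<rfloor>) / real n"
    using eventually_gt_at_top[of 0]
  proof eventually_elim
    case (elim n)
    have "p * real n - 1 \<le> real (nat \<lfloor>p * real n\<rfloor>)"
      unfolding floor by linarith
    moreover have "p - 1 / real n = (p * real n - 1) / real n"
      using elim by (simp add: field_simps)
    ultimately show ?case
      using elim by (simp add: divide_right_mono)
  qed
  show "\<forall>\<^sub>F n in sequentially. real (nat \<lfloor>p * real n\<rfloor>) / real n \<le> p"
    using eventually_gt_at_top[of 0]
  proof eventually_elim
    case (elim n)
    have "real (nat \<lfloor>p * real n\<rfloor>) \<le> p * real n"
      unfolding floor by linarith
    then show ?case
      using elim by (simp add: field_simps)
  qed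
  show "(\<lambda>n. p - 1 / real n) \<longlonglongrightarrow> p"
    using tendsto_diff[OF tendsto_const lim_const_over_n, of p 1] by simp
qed simp

lemma block_sizes:
  fixes p q :: real
  assumes "0 \<le> p" "0 \<le> q" "p + q \<le> 1"
  obtains a b :: "nat \<Rightarrow> nat" where "\<And>n. a n + b n \<le> n"
    and "(\<lambda>n. real (a n) / real n) \<longlonglongrightarrow> p" and "(\<lambda>n. real (b n) / real n) \<longlonglongrightarrow> q"
proof -
  define a where "a n = nat \<lfloor>p * real n\<rfloor>" for n
  define c where "c n = nat \<lfloor>(p + q) * real n\<rfloor>" for n
  have ac: "a n \<le> c n" for n
    unfolding a_def c_def using assms by (intro nat_mono floor_mono mult_right_mono) auto
  have "c n \<le> n" for n
  proof -
    have "(p + q) * real n \<le> real n"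
      using assms by (simp add: mult_left_le_one_le)
    then show ?thesis
      unfolding c_def by linarith
  qed
  moreover have "(\<lambda>n. real (c n) / real n - real (a n) / real n) \<longlonglongrightarrow> (p + q) - p"
    unfolding a_def c_def using assms by (intro tendsto_diff tendsto_nat_floor_mult_div) auto
  then have "(\<lambda>n. real (c n - a n) / real n) \<longlonglongrightarrow> q"
    using ac by (simp add: of_nat_diff diff_divide_distrib)
  ultimately show ?thesis
    using that[of a "\<lambda>n. c n - a n"] ac tendsto_nat_floor_mult_div[OF assms(1)]
    unfolding a_def by (simp add: le_add_diff_inverse)
qed

section \<open>Limits of copy densities\<close>

definition copy_count_bound :: "cgraph \<Rightarrow> real \<Rightarrow> (real \<Rightarrow> real \<Rightarrow> real) \<Rightarrow> bool" where
  "copy_count_bound F c \<phi> \<longleftrightarrow> (\<forall>G. c3graph G \<longrightarrow> 2 \<le> card (verts G) \<longrightarrow>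
     c * real (N3 F G) \<le> \<phi> (edens Blue G) (edens Green G) * real (card (verts G)) ^ card (verts F))"

lemma copy_count_boundD:
  assumes "copy_count_bound F c \<phi>" "c3graph G" "2 \<le> card (verts G)"
  shows "c * real (N3 F G) \<le> \<phi> (edens Blue G) (edens Green G) * real (card (verts G)) ^ card (verts F)"
  using assms unfolding copy_count_bound_def by blast

lemma eventually_dens3_le_count_bound:
  assumes "copy_count_bound F c \<phi>" "0 < c" "\<And>k. c3graph (Gs k)"
    and "filterlim (\<lambda>k. card (verts (Gs k))) at_top sequentially"
  shows "\<forall>\<^sub>F k in sequentially. dens3 F (Gs k) \<le> \<phi> (edens Blue (Gs k)) (edens Green (Gs k))
    * real (card (verts (Gs k))) ^ card (verts F) / (c * real (card (verts (Gs k)) choose card (verts F)))"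
  using assms(4)[unfolded filterlim_at_top, rule_format, of "max 2 (card (verts F))"]
proof eventually_elim
  case (elim k)
  have "dens3 F (Gs k) = c * real (N3 F (Gs k)) / (c * real (card (verts (Gs k)) choose card (verts F)))"
    using assms(2) by (simp add: dens3_def)
  also have "\<dots> \<le> \<phi> (edens Blue (Gs k)) (edens Green (Gs k)) * real (card (verts (Gs k))) ^ card (verts F)
      / (c * real (card (verts (Gs k)) choose card (verts F)))"
    using copy_count_boundD[OF assms(1,3)] elim assms(2) by (intro divide_right_mono) auto
  finally show ?case .
qed

lemma tendsto_count_bound:
  assumes "isCont (case_prod \<phi>) (xb, xg)" "filterlim n at_top sequentially"
    and "eb \<longlonglongrightarrow> xb" "eg \<longlonglongrightarrow> xg" "c \<noteq> 0"
  shows "(\<lambda>k. \<phi> (eb k) (eg k) * real (n k) ^ m / (c * real (n k choose m))) \<longlonglongrightarrow> \<phi> xb xg * fact m / c"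
proof -
  have "(\<lambda>k. \<phi> (eb k) (eg k)) \<longlonglongrightarrow> \<phi> xb xg"
    using isCont_tendsto_compose[OF assms(1) tendsto_Pair[OF assms(3,4)]] by simp
  moreover have "(\<lambda>k. c * (real (n k choose m) / real (n k) ^ m)) \<longlonglongrightarrow> c * (1 / fact m)"
    using tendsto_mult_left[OF filterlim_compose[OF tendsto_choose_div_power_self assms(2)]]
    by (simp add: o_def)
  ultimately have "(\<lambda>k. \<phi> (eb k) (eg k) / (c * (real (n k choose m) / real (n k) ^ m)))
      \<longlonglongrightarrow> \<phi> xb xg / (c * (1 / fact m))"
    using assms(5) by (intro tendsto_divide) auto
  then show ?thesis
    by (simp add: field_simps)
qed

lemma realizes_le:
  assumes bound: "copy_count_bound F c \<phi>" "0 < c" and cont: "isCont (case_prod \<phi>) (xb, xg)"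
    and R: "realizes F Gs xb xg y"
  shows "y \<le> \<phi> xb xg * fact (card (verts F)) / c"
proof (rule tendsto_le[OF _ tendsto_count_bound[OF cont]])
  show "c \<noteq> 0"
    using bound(2) by simp
  show "(\<lambda>k. dens3 F (Gs k)) \<longlonglongrightarrow> y"
    using R by (simp add: realizes_def)
  show "\<forall>\<^sub>F k in sequentially. dens3 F (Gs k) \<le> \<phi> (edens Blue (Gs k)) (edens Green (Gs k))
    * real (card (verts (Gs k))) ^ card (verts F) / (c * real (card (verts (Gs k)) choose card (verts F)))"
    using R by (intro eventually_dens3_le_count_bound[OF bound]) (auto simp: realizes_def)
qed (use R in \<open>auto simp: realizes_def\<close>)

lemma I3_eq:
  assumes "copy_count_bound F c \<phi>" "0 < c" "isCont (case_prod \<phi>) (xb, xg)"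
    and "realizes F Gs xb xg (\<phi> xb xg * fact (card (verts F)) / c)"
  shows "I3 F xb xg = \<phi> xb xg * fact (card (verts F)) / c"
  unfolding I3_def
  by (rule cSup_eq_maximum) (use assms(4) realizes_le[OF assms(1-3)] in auto)

lemma realizes_Kprime_sandwich:
  assumes bound: "copy_count_bound (Kprime s t) c \<phi>" "0 < c"
    and cont: "isCont (case_prod \<phi>) (xb, xg)"
    and G: "\<And>n. c3graph (Gs n)" "\<And>n. card (verts (Gs n)) = n"
    and dens: "(\<lambda>n. edens Blue (Gs n)) \<longlonglongrightarrow> xb" "(\<lambda>n. edens Green (Gs n)) \<longlonglongrightarrow> xg"
    and low: "\<And>n. (a n choose s) * (b n choose t) \<le> N3 (Kprime s t) (Gs n)"
    and ab: "(\<lambda>n. real (a n) / real n) \<longlonglongrightarrow> p" "(\<lambda>n. real (b n) / real n) \<longlonglongrightarrow> q"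
    and val: "\<phi> xb xg / c = p ^ s * q ^ t / (fact s * fact t)"
  shows "realizes (Kprime s t) Gs xb xg (\<phi> xb xg * fact (s + t) / c)"
proof -
  have nlim: "filterlim (\<lambda>n. card (verts (Gs n))) at_top sequentially"
    unfolding G(2) by (rule filterlim_ident)
  define L where "L n = real (a n choose s) / real n ^ s * (real (b n choose t) / real n ^ t)
      / (real (n choose (s + t)) / real n ^ (s + t))" for n
  have "L \<longlonglongrightarrow> (p ^ s / fact s * (q ^ t / fact t)) / (1 / fact (s + t))"
    unfolding L_def
    by (intro tendsto_divide tendsto_mult tendsto_choose_div_power ab tendsto_choose_div_power_self) simp
  moreover have "(p ^ s / fact s * (q ^ t / fact t)) / (1 / fact (s + t)) = \<phi> xb xg / c * fact (s + t)"
    unfolding val by simp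
  ultimately have L: "L \<longlonglongrightarrow> \<phi> xb xg * fact (s + t) / c"
    by simp
  have "\<forall>\<^sub>F n in sequentially. L n \<le> dens3 (Kprime s t) (Gs n)"
    using eventually_gt_at_top[of 0]
  proof eventually_elim
    case (elim n)
    have "L n = real ((a n choose s) * (b n choose t)) / real (n choose (s + t))"
      using elim unfolding L_def by (simp add: power_add field_simps)
    also have "\<dots> \<le> dens3 (Kprime s t) (Gs n)"
      using of_nat_mono[OF low[of n], where 'a=real]
      unfolding dens3_def G(2) verts_Kprime by (simp add: divide_right_mono)
    finally show ?case .
  qed
  moreover note eventually_dens3_le_count_bound[OF bound G(1) nlim, unfolded verts_Kprime card_atLeastLessThan diff_zero]
  moreover note tendsto_count_bound[OF cont nlim dens less_imp_neq[OF bound(2), symmetric], of "s + t"]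
  ultimately have "(\<lambda>n. dens3 (Kprime s t) (Gs n)) \<longlonglongrightarrow> \<phi> xb xg * fact (s + t) / c"
    by (rule tendsto_sandwich[OF _ _ L])
  then show ?thesis
    unfolding realizes_def using G nlim dens by auto
qed

section \<open>Extremal constructions\<close>

text \<open>The extremal colouring is \<open>block_graph n a b Red\<close> for \<open>\<surd>x\<^sub>b + \<surd>x\<^sub>g \<le> 1\<close> and
  \<open>block_graph n a b Green\<close> otherwise.\<close>
definition block_graph :: "nat \<Rightarrow> nat \<Rightarrow> nat \<Rightarrow> color \<Rightarrow> cgraph" where
  "block_graph n a b c = ({0..<n}, \<lambda>e. if e \<subseteq> {..<a} then Blue else if e \<subseteq> {a..<a + b} then Green
     else if e \<subseteq> {..<a + b} then Red else c)"

lemma verts_block_graph: "verts (block_graph n a b c) = {0..<n}"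
  by (simp add: block_graph_def verts_def)

lemma col_block_graph:
  "col (block_graph n a b c) e = (if e \<subseteq> {..<a} then Blue else if e \<subseteq> {a..<a + b} then Green
     else if e \<subseteq> {..<a + b} then Red else c)"
  by (simp add: block_graph_def col_def)

lemma c3graph_block_graph: "c3graph (block_graph n a b c)"
  by (simp add: c3graph_def verts_block_graph)

lemma N3_block_graph_ge:
  assumes "a + b \<le> n"
  shows "(a choose s) * (b choose t) \<le> N3 (Kprime s t) (block_graph n a b c)"
proof -
  have "finite (verts (block_graph n a b c))"
    by (simp add: verts_block_graph)
  moreover have "{..<a} \<union> {a..<a + b} \<subseteq> verts (block_graph n a b c)"
    using assms by (auto simp: verts_block_graph)
  moreover have "{..<a} \<inter> {a..<a + b} = {}"
    by auto
  moreover have "\<forall>x\<in>{..<a} \<union> {a..<a + b}. \<forall>y\<in>{..<a} \<union> {a..<a + b}. x \<noteq> y \<longrightarrow>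
      col (block_graph n a b c) {x, y} = part_col {..<a} {a..<a + b} x y"
    by (auto simp: col_block_graph part_col_def)
  ultimately show ?thesis
    using N3_Kprime_ge[of "block_graph n a b c" "{..<a}" "{a..<a + b}" s t] by simp
qed

lemma edges_nonempty: "e \<in> edges V \<Longrightarrow> e \<noteq> {}"
  by (auto simp: edges_def)

lemma disjoint_edges: "A \<inter> B = {} \<Longrightarrow> edges A \<inter> edges B = {}"
  by (auto simp: edges_def doubleton_eq_iff)

lemma ecount_block_graph_Blue:
  assumes "c \<noteq> Blue" "a \<le> n"
  shows "ecount Blue (block_graph n a b c) = a choose 2"
proof -
  have "{e \<in> edges {0..<n}. col (block_graph n a b c) e = Blue} = {e \<in> edges {0..<n}. e \<subseteq> {..<a}}"
    using assms(1) by (auto simp: col_block_graph)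
  also have "\<dots> = edges {..<a}"
    using assms(2) by (intro edges_restrict) auto
  finally show ?thesis
    by (simp add: ecount_def verts_block_graph card_edges)
qed

lemma ecount_block_graph_Green:
  assumes "a + b \<le> n"
  shows "ecount Green (block_graph n a b Red) = b choose 2"
proof -
  have "{e \<in> edges {0..<n}. col (block_graph n a b Red) e = Green}
      = {e \<in> edges {0..<n}. e \<subseteq> {a..<a + b}}"
  proof -
    have "\<not> e \<subseteq> {..<a}" if "e \<in> edges {0..<n}" "e \<subseteq> {a..<a + b}" for e
      using edges_nonempty[OF that(1)] that(2) by fastforce
    then show ?thesis
      by (auto simp: col_block_graph)
  qed
  also have "\<dots> = edges {a..<a + b}"
    using assms by (intro edges_restrict) auto
  finally show ?thesis
    by (simp add: ecount_def verts_block_graph card_edges)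
qed

lemma ecount_block_graph_Red:
  assumes "a + b \<le> n"
  shows "ecount Red (block_graph n a b Green) + (a choose 2) + (b choose 2) = (a + b) choose 2"
proof -
  let ?R = "{e \<in> edges {0..<n}. col (block_graph n a b Green) e = Red}"
  have "edges {..<a + b} = ?R \<union> edges {..<a} \<union> edges {a..<a + b}"
    using assms edges_restrict[of "{..<a + b}" "{0..<n}"]
    by (auto simp: col_block_graph edges_eq)
  moreover have "?R \<inter> edges {..<a} = {}" "?R \<inter> edges {a..<a + b} = {}"
    by (auto simp: col_block_graph edges_eq)
  moreover have "edges {..<a} \<inter> edges {a..<a + b} = {}"
    by (rule disjoint_edges) auto
  ultimately have "card (edges {..<a + b}) = card ?R + card (edges {..<a}) + card (edges {a..<a + b})"
    by (simp add: card_Un_disjoint finite_edges Int_Un_distrib2)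
  then show ?thesis
    by (simp add: ecount_def verts_block_graph card_edges)
qed

lemma edens_block_graph:
  "edens c (block_graph n a b c') = real (ecount c (block_graph n a b c')) / real (n choose 2)"
  by (simp add: edens_def verts_block_graph)

lemma tendsto_edens_block_graph_Blue:
  assumes "c \<noteq> Blue" "\<And>n. a n + b n \<le> n" "(\<lambda>n. real (a n) / real n) \<longlonglongrightarrow> p"
  shows "(\<lambda>n. edens Blue (block_graph n (a n) (b n) c)) \<longlonglongrightarrow> p ^ 2"
  using tendsto_choose_div_choose[OF assms(3), of 2] ecount_block_graph_Blue[OF assms(1) add_leD1[OF assms(2)]]
  by (simp add: edens_block_graph)

lemma tendsto_edens_block_graph_Green:
  assumes "\<And>n. a n + b n \<le> n" "(\<lambda>n. real (b n) / real n) \<longlonglongrightarrow> q"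
  shows "(\<lambda>n. edens Green (block_graph n (a n) (b n) Red)) \<longlonglongrightarrow> q ^ 2"
  using tendsto_choose_div_choose[OF assms(2), of 2] ecount_block_graph_Green[OF assms(1)]
  by (simp add: edens_block_graph)

lemma tendsto_edens_block_graph_Red:
  assumes ab: "\<And>n. a n + b n \<le> n"
    and lim: "(\<lambda>n. real (a n) / real n) \<longlonglongrightarrow> p" "(\<lambda>n. real (b n) / real n) \<longlonglongrightarrow> q"
  shows "(\<lambda>n. edens Red (block_graph n (a n) (b n) Green)) \<longlonglongrightarrow> 2 * p * q"
proof -
  have "real (ecount Red (block_graph n (a n) (b n) Green)) + real (a n choose 2) + real (b n choose 2)
      = real ((a n + b n) choose 2)" for n
    using arg_cong[OF ecount_block_graph_Red[OF ab, of n], of real] by simp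
  then have eq: "edens Red (block_graph n (a n) (b n) Green) = real ((a n + b n) choose 2) / real (n choose 2)
      - real (a n choose 2) / real (n choose 2) - real (b n choose 2) / real (n choose 2)" for n
    by (simp add: edens_block_graph flip: diff_divide_distrib eq_diff_eq)
  have "(\<lambda>n. real (a n + b n) / real n) \<longlonglongrightarrow> p + q"
    using tendsto_add[OF lim] by (simp add: add_divide_distrib)
  from tendsto_diff[OF tendsto_diff[OF tendsto_choose_div_choose[OF this, of 2]
        tendsto_choose_div_choose[OF lim(1), of 2]] tendsto_choose_div_choose[OF lim(2), of 2]]
  show ?thesis
    unfolding eq by (simp add: power2_eq_square algebra_simps)
qed

lemma tendsto_edens_block_graph_Green_rest:
  assumes ab: "\<And>n. a n + b n \<le> n"
    and lim: "(\<lambda>n. real (a n) / real n) \<longlonglongrightarrow> p" "(\<lambda>n. real (b n) / real n) \<longlonglongrightarrow> q"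
  shows "(\<lambda>n. edens Green (block_graph n (a n) (b n) Green)) \<longlonglongrightarrow> 1 - p\<^sup>2 - 2 * p * q"
proof (rule Lim_transform_eventually)
  let ?G = "\<lambda>n. block_graph n (a n) (b n) Green"
  show "(\<lambda>n. 1 - edens Blue (?G n) - edens Red (?G n)) \<longlonglongrightarrow> 1 - p\<^sup>2 - 2 * p * q"
    using tendsto_edens_block_graph_Blue[OF _ ab lim(1)] tendsto_edens_block_graph_Red[OF ab lim]
    by (intro tendsto_diff tendsto_const) auto
  show "\<forall>\<^sub>F n in sequentially. 1 - edens Blue (?G n) - edens Red (?G n) = edens Green (?G n)"
    using eventually_ge_at_top[of 2]
  proof eventually_elim
    case (elim n)
    then show ?case
      using edens_sum[of "?G n"] by (simp add: verts_block_graph)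
  qed
qed

lemma I3_Kprime_two_cliques:
  fixes xb xg :: real
  assumes s: "2 \<le> s" "2 \<le> t" and x: "0 \<le> xb" "0 \<le> xg" "sqrt xb + sqrt xg \<le> 1"
  shows "I3 (Kprime s t) xb xg = sqrt xb ^ s * sqrt xg ^ t * real ((s + t) choose s)"
proof -
  define \<phi> where "\<phi> u v = sqrt u ^ s * sqrt v ^ t" for u v :: real
  have bound: "copy_count_bound (Kprime s t) (fact s * fact t) \<phi>"
    using N3_Kprime_le_edens[OF _ s] by (simp add: copy_count_bound_def c3graph_def \<phi>_def verts_Kprime)
  have cont: "isCont (case_prod \<phi>) (xb, xg)"
    unfolding \<phi>_def split_def by (intro continuous_intros)
  obtain a b where ab: "\<And>n. a n + b n \<le> n"
    "(\<lambda>n. real (a n) / real n) \<longlonglongrightarrow> sqrt xb" "(\<lambda>n. real (b n) / real n) \<longlonglongrightarrow> sqrt xg"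
    using block_sizes[of "sqrt xb" "sqrt xg"] x by auto
  have "realizes (Kprime s t) (\<lambda>n. block_graph n (a n) (b n) Red) xb xg
      (\<phi> xb xg * fact (s + t) / (fact s * fact t))"
    using tendsto_edens_block_graph_Blue[OF _ ab(1,2)] tendsto_edens_block_graph_Green[OF ab(1,3)]
      N3_block_graph_ge[OF ab(1)] ab x
    by (intro realizes_Kprime_sandwich[OF bound _ cont, where a = a and b = b])
       (auto simp: c3graph_block_graph verts_block_graph \<phi>_def)
  then have "I3 (Kprime s t) xb xg = \<phi> xb xg * fact (s + t) / (fact s * fact t)"
    using I3_eq[OF bound _ cont] by (simp add: verts_Kprime)
  then show ?thesis
    by (simp add: \<phi>_def binomial_fact)
qed

text \<open>For \<open>\<surd>x\<^sub>b + \<surd>x\<^sub>g > 1\<close> the blue block has density \<open>p = \<surd>x\<^sub>b\<close> and the red edges form a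
  complete bipartite graph between it and a block of density \<open>q = x\<^sub>r / (2p)\<close>; both fit.\<close>
lemma red_block_fraction_le:
  fixes p xg xr :: real
  assumes "0 \<le> p" "0 \<le> xg" "0 \<le> xr" "p\<^sup>2 + xg + xr = 1" and sq: "p + sqrt xg > 1"
  shows "0 < p" "p + xr / (2 * p) \<le> 1"
proof -
  have "xg \<le> 1"
    using assms(3,4) zero_le_power2[of p] by linarith
  then have "sqrt xg \<le> 1"
    by simp
  then show p: "0 < p"
    using sq by linarith
  have "p\<^sup>2 \<le> 1"
    using assms(2-4) by linarith
  then have "p \<le> 1"
    using assms(1) by (simp add: power_le_one_iff)
  moreover have "1 - p \<le> sqrt xg"
    using sq by linarith
  ultimately have "(1 - p)\<^sup>2 \<le> xg"
    using power_mono[of "1 - p" "sqrt xg" 2] assms(2) by simp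
  then have "xr \<le> 2 * p * (1 - p)"
    using assms(4) by (simp add: power2_eq_square algebra_simps)
  then have "xr / (2 * p) \<le> 2 * p * (1 - p) / (2 * p)"
    using p by (intro divide_right_mono) auto
  then show "p + xr / (2 * p) \<le> 1"
    using p by simp
qed

lemma I3_Kprime_red_matching:
  fixes xb xg xr :: real
  assumes s: "2 \<le> s" and x: "0 \<le> xb" "0 \<le> xg" "0 \<le> xr" "xb + xg + xr = 1"
    and sq: "sqrt xb + sqrt xg > 1"
  shows "I3 (Kprime s s) xb xg = (xr / 2) ^ s * real ((2 * s) choose s)"
proof -
  define \<phi> where "\<phi> u v = ((1 - u - v) / 2) ^ s" for u v :: real
  have bound: "copy_count_bound (Kprime s s) (fact s ^ 2) \<phi>"
  proof (unfold copy_count_bound_def, intro allI impI)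
    fix G assume G: "c3graph G" "2 \<le> card (verts G)"
    then have "edens Red G = 1 - edens Blue G - edens Green G"
      using edens_sum[of G] by (simp add: c3graph_def)
    then show "fact s ^ 2 * real (N3 (Kprime s s) G)
        \<le> \<phi> (edens Blue G) (edens Green G) * real (card (verts G)) ^ card (verts (Kprime s s))"
      using N3_Kprime_le_edens_Red[of G s] G s by (simp add: c3graph_def \<phi>_def verts_Kprime mult_2)
  qed
  have cont: "isCont (case_prod \<phi>) (xb, xg)"
    unfolding \<phi>_def split_def by (auto intro!: continuous_intros)
  define p where "p = sqrt xb"
  define q where "q = xr / (2 * p)"
  have "p\<^sup>2 + xg + xr = 1" "p + sqrt xg > 1"
    using x sq by (simp_all add: p_def)
  then have pq: "0 < p" "0 \<le> q" "p + q \<le> 1" "2 * p * q = xr"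
    using red_block_fraction_le[of p xg xr] x by (auto simp: p_def q_def)
  obtain a b where ab: "\<And>n. a n + b n \<le> n"
    "(\<lambda>n. real (a n) / real n) \<longlonglongrightarrow> p" "(\<lambda>n. real (b n) / real n) \<longlonglongrightarrow> q"
    using block_sizes[of p q] pq by auto
  let ?Gs = "\<lambda>n. block_graph n (a n) (b n) Green"
  have blue: "(\<lambda>n. edens Blue (?Gs n)) \<longlonglongrightarrow> xb"
    using tendsto_edens_block_graph_Blue[OF _ ab(1,2)] x by (simp add: p_def)
  have "1 - p\<^sup>2 - 2 * p * q = xg"
    using x pq(4) by (simp add: p_def)
  then have green: "(\<lambda>n. edens Green (?Gs n)) \<longlonglongrightarrow> xg"
    using tendsto_edens_block_graph_Green_rest[OF ab] by simp
  have xr: "1 - xb - xg = xr"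
    using x by simp
  then have "\<phi> xb xg / fact s ^ 2 = p ^ s * q ^ s / (fact s * fact s)"
    using pq(4)[symmetric] by (simp add: \<phi>_def power_mult_distrib power2_eq_square)
  then have "realizes (Kprime s s) ?Gs xb xg (\<phi> xb xg * fact (s + s) / fact s ^ 2)"
    using N3_block_graph_ge[OF ab(1)] ab blue green
    by (intro realizes_Kprime_sandwich[OF bound _ cont, where a = a and b = b])
       (auto simp: c3graph_block_graph verts_block_graph)
  then have "I3 (Kprime s s) xb xg = \<phi> xb xg * fact (s + s) / fact s ^ 2"
    using I3_eq[OF bound _ cont] by (simp add: verts_Kprime)
  then show ?thesis
    by (simp add: \<phi>_def xr binomial_fact mult_2 power2_eq_square)
qed

lemma powr_half_eq_sqrt_power:
  assumes "0 \<le> x" "0 < k"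
  shows "x powr (real k / 2) = sqrt x ^ k"
proof (cases "x = 0")
  case False
  then have "sqrt x ^ k = (x powr (1 / 2)) ^ k"
    using assms by (simp add: powr_half_sqrt)
  also have "\<dots> = x powr (real k / 2)"
    using False assms by (simp add: powr_power)
  finally show ?thesis ..
qed (use assms in simp)

theorem theorem3:
  fixes s t :: nat and xb xg xr :: real
  assumes "2 \<le> s" "s \<le> t"
    and "xb \<in> {0..1}" "xg \<in> {0..1}" "xr \<in> {0..1}" "xb + xg + xr = 1"
  shows "(sqrt xb + sqrt xg \<le> 1 \<longrightarrow>
           I3 (Kprime s t) xb xg = xb powr (real s / 2) * xg powr (real t / 2) * real ((s + t) choose s))
       \<and> (sqrt xb + sqrt xg > 1 \<longrightarrow>
           I3 (Kprime s s) xb xg = (xr / 2) ^ s * real ((2 * s) choose s))"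
  using assms I3_Kprime_two_cliques[of s t xb xg] I3_Kprime_red_matching[of s xb xg xr]
  by (simp add: powr_half_eq_sqrt_power)

end
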